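(* Let $(X,d)$ be a compact metric space, $(\Omega,\mathcal{B},\mathbf{P})$ a probability space, and $\xi=\xi(x)$, $x\in X$, a separable real-valued random field which is continuous with respect to $d$ with probability one. Let $\Phi$ be an Orlicz function (not necessarily satisfying the $\Delta_2$ condition) such that $$\Big\|\sup_{x\in X}|\xi(x)|\Big\|_{\Phi}<\infty ,$$ and let $\Psi$ be another Orlicz function which is weaker than $\Phi$, i.e. $\lim_{u\to\infty}\Psi(uv)/\Phi(u)=0$ for every constant $v>0$. Then there exist a random variable $\zeta\ge0$ with $\|\zeta\|_{\Psi}=1$ and a non-random function $h:[0,\operatorname{diam}(d,X)]\to[0,\infty)$, continuous, strictly increasing, with $h(0)=h(0+)=0$ (depending on $\Psi,\Phi$), such that with probability one $$\Delta(\xi,\delta)\le\zeta\cdot h(\delta)\quad\text{for all }\delta\in[0,\operatorname{diam}(d,X)].$$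
   Context: For a function $f:X\to\mathbb{R}$ the modulus of continuity is $\Delta(f,\delta)=\sup_{d(x,y)\le\delta}|f(x)-f(y)|$, $\delta\ge0$, and $\operatorname{diam}(d,X)=\sup_{x,y\in X}d(x,y)$. An Orlicz function is a function $\Phi:\mathbb{R}\to[0,\infty)$ that is convex, even, continuous, twice continuously differentiable on $u\ge2$, strictly increasing on $[0,\infty)$, with $\Phi(0)=0$ and $\lim_{|u|\to\infty}\Phi(u)=\infty$. The Orlicz space $L(\Phi)$ over $(\Omega,\mathcal{B},\mathbf{P})$ carries the Luxemburg norm $\|\zeta\|_{\Phi}=\inf\{k>0:\ \mathbf{E}\,\Phi(\zeta/k)\le1\}$. *)

theory Defs
  imports "HOL-Analysis.Analysis" "HOL-Probability.Probability"
begin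

definition orlicz_function :: "(real \<Rightarrow> real) \<Rightarrow> bool" where
  "orlicz_function \<Phi> \<longleftrightarrow>
     (\<forall>u. \<Phi> u \<ge> 0) \<and>
     convex_on UNIV \<Phi> \<and>
     (\<forall>u. \<Phi> (- u) = \<Phi> u) \<and>
     continuous_on UNIV \<Phi> \<and>
     (\<exists>\<Phi>' \<Phi>''. (\<forall>u\<in>{2..}. (\<Phi> has_real_derivative \<Phi>' u) (at u within {2..}) \<and>
                            (\<Phi>' has_real_derivative \<Phi>'' u) (at u within {2..})) \<and>
                 continuous_on {2..} \<Phi>'') \<and>
     strict_mono_on {0..} \<Phi> \<and>
     \<Phi> 0 = 0 \<and>
     filterlim \<Phi> at_top at_infinity"

definition orlicz_adm :: "'b measure \<Rightarrow> (real \<Rightarrow> real) \<Rightarrow> ('b \<Rightarrow> real) \<Rightarrow> real set" where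
  "orlicz_adm M \<Phi> \<zeta> = {k. k > 0 \<and> (\<integral>\<^sup>+ \<omega>. ennreal (\<Phi> (\<zeta> \<omega> / k)) \<partial>M) \<le> 1}"

definition orlicz_norm_finite :: "'b measure \<Rightarrow> (real \<Rightarrow> real) \<Rightarrow> ('b \<Rightarrow> real) \<Rightarrow> bool" where
  "orlicz_norm_finite M \<Phi> \<zeta> \<longleftrightarrow> orlicz_adm M \<Phi> \<zeta> \<noteq> {}"

definition orlicz_norm :: "'b measure \<Rightarrow> (real \<Rightarrow> real) \<Rightarrow> ('b \<Rightarrow> real) \<Rightarrow> real" where
  "orlicz_norm M \<Phi> \<zeta> = Inf (orlicz_adm M \<Phi> \<zeta>)"

definition modulus_cont :: "'a set \<Rightarrow> ('a \<Rightarrow> 'a \<Rightarrow> real) \<Rightarrow> ('a \<Rightarrow> real) \<Rightarrow> real \<Rightarrow> real" where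
  "modulus_cont X d f \<delta> =
     (SUP p \<in> {(x, y). x \<in> X \<and> y \<in> X \<and> d x y \<le> \<delta>}. \<bar>f (fst p) - f (snd p)\<bar>)"

definition mdiam :: "'a set \<Rightarrow> ('a \<Rightarrow> 'a \<Rightarrow> real) \<Rightarrow> real" where
  "mdiam X d = (SUP p \<in> X \<times> X. d (fst p) (snd p))"

text \<open>Separable random field (sequential form of Doob's separability).\<close>
definition separable_field ::
  "'b measure \<Rightarrow> 'a set \<Rightarrow> ('a \<Rightarrow> 'a \<Rightarrow> real) \<Rightarrow> ('a \<Rightarrow> 'b \<Rightarrow> real) \<Rightarrow> bool" where
  "separable_field M X d \<xi> \<longleftrightarrow>
     (\<exists>S N. S \<subseteq> X \<and> countable S \<and> N \<in> null_sets M \<and>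
        (\<forall>\<omega>\<in>space M - N. \<forall>x\<in>X. \<exists>s :: nat \<Rightarrow> 'a. range s \<subseteq> S \<and>
            limitin (Metric_space.mtopology X d) s x sequentially \<and>
            (\<lambda>n. \<xi> (s n) \<omega>) \<longlonglongrightarrow> \<xi> x \<omega>))"

end

theory Submission
  imports Defs
begin

text \<open>
  Replace \<open>\<xi>\<close> by a modification with continuous paths and control its modulus of continuity by
  the oscillation \<open>W(r)\<close> of the field over pairs of points of a countable dense set at distance
  \<open>< r\<close>; these oscillations are measurable. Since \<open>\<Psi>\<close> is weaker than \<open>\<Phi>\<close>,
  \<open>\<Psi>(c \<cdot> sup |\<xi>|)\<close> is integrable for every \<open>c > 0\<close>, so by dominated convergence
  \<open>E \<Psi>(2\<^sup>j W(r)) \<rightarrow> 0\<close> as \<open>r \<rightarrow> 0\<close>. Choosing scales \<open>\<theta>\<^sub>j \<rightarrow> 0\<close> with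
  \<open>E \<Psi>(2\<^sup>j W(\<theta>\<^sub>j)) \<le> 2\<^sup>-\<^sup>j\<close>, the variable \<open>sup\<^sub>j 2\<^sup>j W(\<theta>\<^sub>j)\<close> has integrable
  \<open>\<Psi>\<close>-image, hence finite Luxemburg norm; normalised, it is \<open>\<zeta>\<close>. Finally \<open>h\<close> is any
  continuous strictly increasing function with \<open>h \<ge> 2\<^sup>-\<^sup>n\<close> on \<open>[\<theta>\<^sub>n\<^sub>+\<^sub>1, \<infinity>)\<close>: if
  \<open>\<theta>\<^sub>n\<^sub>+\<^sub>1 \<le> \<delta> < \<theta>\<^sub>n\<close>, then \<open>\<Delta>(\<xi>, \<delta>) \<le> W(\<theta>\<^sub>n) \<le> 2\<^sup>-\<^sup>n \<zeta> \<le> \<zeta> h(\<delta>)\<close>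
  up to the normalising constant.
\<close>

section \<open>Orlicz functions and the Luxemburg norm\<close>

context
  fixes \<Psi> :: "real \<Rightarrow> real"
  assumes orlicz: "orlicz_function \<Psi>"
begin

lemma orlicz_nonneg: "0 \<le> \<Psi> u"
  using orlicz by (simp add: orlicz_function_def)

lemma orlicz_zero [simp]: "\<Psi> 0 = 0"
  using orlicz by (simp add: orlicz_function_def)

lemma orlicz_continuous: "continuous_on UNIV \<Psi>"
  using orlicz by (simp add: orlicz_function_def)

lemma borel_measurable_orlicz [measurable]: "\<Psi> \<in> borel_measurable borel"
  using orlicz_continuous by (rule borel_measurable_continuous_onI)

lemma orlicz_strict_mono: "0 \<le> x \<Longrightarrow> x < y \<Longrightarrow> \<Psi> x < \<Psi> y"
  using orlicz unfolding orlicz_function_def strict_mono_on_def by auto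

lemma orlicz_mono: "0 \<le> x \<Longrightarrow> x \<le> y \<Longrightarrow> \<Psi> x \<le> \<Psi> y"
  using orlicz_strict_mono by (cases "x = y") (auto simp: le_less)

lemma orlicz_pos: "0 < x \<Longrightarrow> 0 < \<Psi> x"
  using orlicz_strict_mono[of 0 x] by simp

lemma orlicz_divide_le:
  assumes "1 \<le> k"
  shows "\<Psi> (x / k) \<le> \<Psi> x / k"
proof -
  have "convex_on UNIV \<Psi>"
    using orlicz by (simp add: orlicz_function_def)
  then have "\<Psi> ((1 - 1/k) *\<^sub>R 0 + (1/k) *\<^sub>R x) \<le> (1 - 1/k) * \<Psi> 0 + (1/k) * \<Psi> x"
    using assms by (intro convex_onD) auto
  then show ?thesis
    by simp
qed

lemma orlicz_unbounded: "\<exists>u>0. B < \<Psi> u"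
proof -
  have "filterlim \<Psi> at_top at_infinity"
    using orlicz by (simp add: orlicz_function_def)
  then obtain r where r: "\<And>x. r \<le> norm x \<Longrightarrow> B + 1 \<le> \<Psi> x"
    unfolding filterlim_at_top eventually_at_infinity by blast
  show ?thesis
    using r[of "max r 1"] by (intro exI[of _ "max r 1"]) auto
qed

lemma orlicz_enn2real_SUP_le_suminf:
  assumes "\<And>j. 0 \<le> a j" and "(\<Sum>j. ennreal (\<Psi> (a j))) \<noteq> \<top>"
  shows "ennreal (\<Psi> (enn2real (SUP j. ennreal (a j)))) \<le> (\<Sum>j. ennreal (\<Psi> (a j)))"
    and "a j \<le> enn2real (SUP j. ennreal (a j))"
proof -
  obtain R where R: "(\<Sum>j. ennreal (\<Psi> (a j))) = ennreal R" "0 \<le> R"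
    using assms(2) by (metis ennreal_cases)
  have le_R: "\<Psi> (a j) \<le> R" for j
  proof -
    have "ennreal (\<Psi> (a j)) \<le> (\<Sum>j. ennreal (\<Psi> (a j)))"
      using sum_le_suminf[of "\<lambda>j. ennreal (\<Psi> (a j))" "{j}"] by (auto intro: summableI)
    then show ?thesis
      using R by (simp add: ennreal_le_iff)
  qed
  obtain u where u: "0 < u" "R < \<Psi> u"
    using orlicz_unbounded by blast
  have a_le_u: "a j \<le> u" for j
  proof (rule ccontr)
    assume "\<not> a j \<le> u"
    then have "\<Psi> u < \<Psi> (a j)"
      using u(1) orlicz_strict_mono[of u "a j"] by simp
    then show False
      using le_R[of j] u(2) by simp
  qed
  then have bdd: "bdd_above (range a)"
    by (auto intro!: bdd_aboveI)
  have "(SUP j. ennreal (a j)) \<le> ennreal u"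
    using a_le_u by (auto intro!: SUP_least ennreal_leI)
  then have "(SUP j. ennreal (a j)) \<noteq> \<top>"
    by (metis ennreal_neq_top neq_top_trans)
  then have "ennreal (SUP j. a j) = (SUP j. ennreal (a j))"
    by (intro ennreal_SUP) (auto simp: assms(1))
  moreover have "0 \<le> (SUP j. a j)"
    using assms(1)[of 0] cSUP_upper[OF UNIV_I bdd, of 0] by linarith
  ultimately have SUP_eq: "enn2real (SUP j. ennreal (a j)) = (SUP j. a j)"
    by (metis enn2real_ennreal)
  show "a j \<le> enn2real (SUP j. ennreal (a j))"
    unfolding SUP_eq using bdd by (rule cSUP_upper[OF UNIV_I])
  have "Sup (range a) \<in> closure (range a)"
    using bdd by (intro closure_contains_Sup) auto
  moreover have "closure (range a) \<subseteq> {y. \<Psi> y \<le> R}"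
    using le_R by (intro closure_minimal) (auto intro!: closed_Collect_le orlicz_continuous continuous_intros)
  ultimately have "\<Psi> (SUP j. a j) \<le> R"
    by auto
  then show "ennreal (\<Psi> (enn2real (SUP j. ennreal (a j)))) \<le> (\<Sum>j. ennreal (\<Psi> (a j)))"
    using SUP_eq R by (simp add: ennreal_le_iff)
qed

end

lemma orlicz_adm_divide:
  assumes "0 < c"
  shows "orlicz_adm M \<Psi> (\<lambda>\<omega>. \<zeta> \<omega> / c) = (\<lambda>k. k / c) ` orlicz_adm M \<Psi> \<zeta>"
proof (intro set_eqI iffI)
  fix k assume "k \<in> orlicz_adm M \<Psi> (\<lambda>\<omega>. \<zeta> \<omega> / c)"
  then have "c * k \<in> orlicz_adm M \<Psi> \<zeta>"
    using assms by (auto simp: orlicz_adm_def mult.commute)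
  then show "k \<in> (\<lambda>k. k / c) ` orlicz_adm M \<Psi> \<zeta>"
    using assms by (auto intro!: image_eqI[of _ _ "c * k"])
qed (use assms in \<open>auto simp: orlicz_adm_def\<close>)

lemma orlicz_norm_divide:
  assumes "orlicz_norm_finite M \<Psi> \<zeta>" and "0 < c"
  shows "orlicz_norm_finite M \<Psi> (\<lambda>\<omega>. \<zeta> \<omega> / c)"
    and "orlicz_norm M \<Psi> (\<lambda>\<omega>. \<zeta> \<omega> / c) = orlicz_norm M \<Psi> \<zeta> / c"
proof -
  show "orlicz_norm_finite M \<Psi> (\<lambda>\<omega>. \<zeta> \<omega> / c)"
    using assms by (simp add: orlicz_norm_finite_def orlicz_adm_divide)
  have "bdd_below (orlicz_adm M \<Psi> \<zeta>)"
    by (rule bdd_belowI[of _ 0]) (simp add: orlicz_adm_def)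
  then have "Inf (orlicz_adm M \<Psi> \<zeta>) / c = Inf ((\<lambda>k. k / c) ` orlicz_adm M \<Psi> \<zeta>)"
    using assms by (intro continuous_at_Inf_mono continuous_intros)
      (auto simp: orlicz_norm_finite_def mono_def divide_right_mono)
  then show "orlicz_norm M \<Psi> (\<lambda>\<omega>. \<zeta> \<omega> / c) = orlicz_norm M \<Psi> \<zeta> / c"
    using assms(2) by (simp add: orlicz_norm_def orlicz_adm_divide)
qed

lemma orlicz_norm_finite_if_nn_integral_finite:
  assumes "orlicz_function \<Psi>" and [measurable]: "\<zeta> \<in> borel_measurable M"
    and "(\<integral>\<^sup>+\<omega>. ennreal (\<Psi> (\<zeta> \<omega>)) \<partial>M) \<noteq> \<infinity>"
  shows "orlicz_norm_finite M \<Psi> \<zeta>"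
proof -
  note [measurable] = borel_measurable_orlicz[OF assms(1)]
  obtain C where C: "(\<integral>\<^sup>+\<omega>. ennreal (\<Psi> (\<zeta> \<omega>)) \<partial>M) = ennreal C" "0 \<le> C"
    using assms(3) by (cases "\<integral>\<^sup>+\<omega>. ennreal (\<Psi> (\<zeta> \<omega>)) \<partial>M" rule: ennreal_cases) auto
  define \<kappa> where "\<kappa> = max 1 C"
  have "(\<integral>\<^sup>+\<omega>. ennreal (\<Psi> (\<zeta> \<omega> / \<kappa>)) \<partial>M) \<le> (\<integral>\<^sup>+\<omega>. ennreal (1 / \<kappa>) * ennreal (\<Psi> (\<zeta> \<omega>)) \<partial>M)"
  proof (rule nn_integral_mono)
    fix \<omega>
    have "\<Psi> (\<zeta> \<omega> / \<kappa>) \<le> 1 / \<kappa> * \<Psi> (\<zeta> \<omega>)"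
      using orlicz_divide_le[OF assms(1), of \<kappa>] by (simp add: \<kappa>_def)
    then show "ennreal (\<Psi> (\<zeta> \<omega> / \<kappa>)) \<le> ennreal (1 / \<kappa>) * ennreal (\<Psi> (\<zeta> \<omega>))"
      by (simp add: \<kappa>_def ennreal_mult'[symmetric] ennreal_leI)
  qed
  also have "\<dots> = ennreal (1 / \<kappa>) * ennreal C"
    by (subst nn_integral_cmult) (auto simp: C)
  also have "\<dots> = ennreal (C / \<kappa>)"
    using C(2) by (simp add: \<kappa>_def ennreal_mult[symmetric])
  also have "\<dots> \<le> 1"
    using C(2) by (simp add: \<kappa>_def)
  finally show ?thesis
    unfolding orlicz_norm_finite_def orlicz_adm_def by (auto simp: \<kappa>_def intro!: exI[of _ \<kappa>])
qed

lemma orlicz_norm_pos: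
  assumes "prob_space M" and "orlicz_function \<Psi>" and "orlicz_norm_finite M \<Psi> \<zeta>"
    and "0 < a" and "\<And>\<omega>. \<omega> \<in> space M \<Longrightarrow> a \<le> \<zeta> \<omega>"
  shows "0 < orlicz_norm M \<Psi> \<zeta>"
proof -
  interpret prob_space M by fact
  obtain u where u: "0 < u" "1 < \<Psi> u"
    using orlicz_unbounded[OF assms(2)] by blast
  have "a / u \<le> k" if k: "k \<in> orlicz_adm M \<Psi> \<zeta>" for k
  proof (rule ccontr)
    assume "\<not> a / u \<le> k"
    moreover have "0 < k"
      using k by (simp add: orlicz_adm_def)
    ultimately have "1 < \<Psi> (a / k)"
      using u assms(4) orlicz_strict_mono[OF assms(2), of u "a / k"] by (simp add: field_simps)
    have "ennreal (\<Psi> (a / k)) \<le> (\<integral>\<^sup>+\<omega>. ennreal (\<Psi> (\<zeta> \<omega> / k)) \<partial>M)"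
      using \<open>0 < k\<close> assms(4,5) emeasure_space_1
      by (intro nn_integral_ge_const AE_I2 ennreal_leI orlicz_mono[OF assms(2)] divide_right_mono) auto
    also have "\<dots> \<le> 1"
      using k by (simp add: orlicz_adm_def)
    finally have "\<Psi> (a / k) \<le> 1"
      by (simp add: ennreal_le_1)
    with \<open>1 < \<Psi> (a / k)\<close> show False
      by simp
  qed
  then have "a / u \<le> orlicz_norm M \<Psi> \<zeta>"
    using assms(3) by (auto simp: orlicz_norm_def orlicz_norm_finite_def intro!: cInf_greatest)
  then show ?thesis
    using divide_pos_pos[OF assms(4) u(1)] by linarith
qed

lemma orlicz_norm_finite_AE_mono:
  assumes "orlicz_function \<Phi>" and "AE \<omega> in M. 0 \<le> f \<omega> \<and> f \<omega> \<le> g \<omega>"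
    and "orlicz_norm_finite M \<Phi> g"
  shows "orlicz_norm_finite M \<Phi> f"
proof -
  obtain k where k: "0 < k" "(\<integral>\<^sup>+\<omega>. ennreal (\<Phi> (g \<omega> / k)) \<partial>M) \<le> 1"
    using assms(3) by (auto simp: orlicz_norm_finite_def orlicz_adm_def)
  have "AE \<omega> in M. ennreal (\<Phi> (f \<omega> / k)) \<le> ennreal (\<Phi> (g \<omega> / k))"
    using assms(2) by eventually_elim
      (use \<open>0 < k\<close> in \<open>auto intro!: ennreal_leI orlicz_mono[OF assms(1)] divide_right_mono\<close>)
  then have "(\<integral>\<^sup>+\<omega>. ennreal (\<Phi> (f \<omega> / k)) \<partial>M) \<le> (\<integral>\<^sup>+\<omega>. ennreal (\<Phi> (g \<omega> / k)) \<partial>M)"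
    by (rule nn_integral_mono_AE)
  then show ?thesis
    using k by (auto simp: orlicz_norm_finite_def orlicz_adm_def)
qed

lemma orlicz_weaker_bound:
  assumes "orlicz_function \<Phi>" and "orlicz_function \<Psi>"
    and "((\<lambda>u. \<Psi> (u * v) / \<Phi> u) \<longlongrightarrow> 0) at_top" and "0 < v"
  shows "\<exists>C. \<forall>u\<ge>0. \<Psi> (u * v) \<le> \<Phi> u + C"
proof -
  have "eventually (\<lambda>u. \<Psi> (u * v) / \<Phi> u < 1) at_top"
    using assms(3) by (rule order_tendstoD) simp
  then obtain U where U: "\<And>u. U \<le> u \<Longrightarrow> \<Psi> (u * v) / \<Phi> u < 1"
    by (auto simp: eventually_at_top_linorder)
  define U' where "U' = max U 1"
  have "\<Psi> (u * v) \<le> \<Phi> u + \<Psi> (U' * v)" if "0 \<le> u" for u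
  proof (cases "U' \<le> u")
    case True
    then have "0 < \<Phi> u"
      by (intro orlicz_pos[OF assms(1)]) (auto simp: U'_def)
    moreover have "\<Psi> (u * v) / \<Phi> u < 1"
      using True by (intro U) (auto simp: U'_def)
    ultimately show ?thesis
      using orlicz_nonneg[OF assms(2), of "U' * v"] by (simp add: divide_less_eq)
  next
    case False
    then have "\<Psi> (u * v) \<le> \<Psi> (U' * v)"
      using that assms(4) by (intro orlicz_mono[OF assms(2)] mult_right_mono) auto
    then show ?thesis
      using orlicz_nonneg[OF assms(1), of u] by simp
  qed
  then show ?thesis
    by blast
qed

lemma nn_integral_orlicz_weaker_finite:
  assumes "prob_space M" and "orlicz_function \<Phi>" and "orlicz_function \<Psi>"
    and weaker: "\<And>v. 0 < v \<Longrightarrow> ((\<lambda>u. \<Psi> (u * v) / \<Phi> u) \<longlongrightarrow> 0) at_top"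
    and [measurable]: "g \<in> borel_measurable M" and "\<And>\<omega>. 0 \<le> g \<omega>"
    and "orlicz_norm_finite M \<Phi> g" and "0 < c"
  shows "(\<integral>\<^sup>+\<omega>. ennreal (\<Psi> (c * g \<omega>)) \<partial>M) < \<infinity>"
proof -
  interpret prob_space M by fact
  note [measurable] = borel_measurable_orlicz[OF assms(2)]
  obtain k where k: "0 < k" "(\<integral>\<^sup>+\<omega>. ennreal (\<Phi> (g \<omega> / k)) \<partial>M) \<le> 1"
    using assms(7) by (auto simp: orlicz_norm_finite_def orlicz_adm_def)
  obtain C where C: "\<And>u. 0 \<le> u \<Longrightarrow> \<Psi> (u * (c * k)) \<le> \<Phi> u + C"
    using orlicz_weaker_bound[OF assms(2,3) weaker] k(1) assms(8) by (meson mult_pos_pos)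
  have "C \<ge> 0"
    using C[of 0] orlicz_zero[OF assms(2)] orlicz_zero[OF assms(3)] by simp
  have "\<Psi> (c * g \<omega>) \<le> \<Phi> (g \<omega> / k) + C" for \<omega>
    using C[of "g \<omega> / k"] k(1) assms(6) by (simp add: mult.commute)
  then have "(\<integral>\<^sup>+\<omega>. ennreal (\<Psi> (c * g \<omega>)) \<partial>M) \<le> (\<integral>\<^sup>+\<omega>. ennreal (\<Phi> (g \<omega> / k)) + ennreal C \<partial>M)"
    using orlicz_nonneg[OF assms(2)] \<open>C \<ge> 0\<close>
    by (intro nn_integral_mono) (simp add: ennreal_plus[symmetric] del: ennreal_plus)
  also have "\<dots> = (\<integral>\<^sup>+\<omega>. ennreal (\<Phi> (g \<omega> / k)) \<partial>M) + ennreal C"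
    by (subst nn_integral_add) (auto simp: emeasure_space_1)
  also have "\<dots> < \<infinity>"
    using neq_top_trans[OF ennreal_one_neq_top k(2)] by (simp add: less_top[symmetric])
  finally show ?thesis .
qed

lemma nn_integral_orlicz_tendsto_zero:
  assumes "orlicz_function \<Psi>"
    and [measurable]: "\<And>m. g m \<in> borel_measurable M" "G \<in> borel_measurable M"
    and "\<And>m \<omega>. 0 \<le> g m \<omega>" and "\<And>m \<omega>. g m \<omega> \<le> G \<omega>"
    and "(\<integral>\<^sup>+\<omega>. ennreal (\<Psi> (G \<omega>)) \<partial>M) < \<infinity>"
    and "\<And>\<omega>. (\<lambda>m. g m \<omega>) \<longlonglongrightarrow> 0"
  shows "(\<lambda>m. \<integral>\<^sup>+\<omega>. ennreal (\<Psi> (g m \<omega>)) \<partial>M) \<longlonglongrightarrow> 0"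
proof -
  note [measurable] = borel_measurable_orlicz[OF assms(1)]
  have "(\<lambda>m. ennreal (\<Psi> (g m \<omega>))) \<longlonglongrightarrow> ennreal (\<Psi> 0)" for \<omega>
    using assms(7) orlicz_continuous[OF assms(1)]
    by (intro tendsto_ennrealI isCont_tendsto_compose[of 0 \<Psi>])
      (auto simp: continuous_on_eq_continuous_at)
  then have "(\<lambda>m. \<integral>\<^sup>+\<omega>. ennreal (\<Psi> (g m \<omega>)) \<partial>M) \<longlonglongrightarrow> (\<integral>\<^sup>+\<omega>. 0 \<partial>M)"
    using assms(4-6) orlicz_zero[OF assms(1)]
    by (intro nn_integral_dominated_convergence[where w="\<lambda>\<omega>. ennreal (\<Psi> (G \<omega>))"]
        AE_I2 ennreal_leI orlicz_mono[OF assms(1)])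
      auto
  then show ?thesis
    by simp
qed

lemma orlicz_normalized_majorant:
  assumes "prob_space M" and "orlicz_function \<Psi>"
    and [measurable]: "\<And>j. c j \<in> borel_measurable M" and c_nonneg: "\<And>j \<omega>. 0 \<le> c j \<omega>"
    and summable: "(\<Sum>j. \<integral>\<^sup>+\<omega>. ennreal (\<Psi> (c j \<omega>)) \<partial>M) < \<infinity>"
  shows "\<exists>\<zeta> \<nu>. \<zeta> \<in> borel_measurable M \<and> (\<forall>\<omega>\<in>space M. 0 \<le> \<zeta> \<omega>) \<and>
           orlicz_norm_finite M \<Psi> \<zeta> \<and> orlicz_norm M \<Psi> \<zeta> = 1 \<and> 0 < \<nu> \<and>
           (AE \<omega> in M. \<forall>j. c j \<omega> \<le> \<nu> * \<zeta> \<omega>)"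
proof -
  interpret prob_space M by fact
  note [measurable] = borel_measurable_orlicz[OF assms(2)]
  define S where "S \<omega> = (\<Sum>j. ennreal (\<Psi> (c j \<omega>)))" for \<omega>
  \<comment> \<open>The supremum is taken in \<open>ennreal\<close> to be measurable without a boundedness hypothesis;
    the maximum with 1 keeps the Luxemburg norm away from 0.\<close>
  define \<zeta>' where "\<zeta>' \<omega> = max 1 (enn2real (SUP j. ennreal (c j \<omega>)))" for \<omega>
  have S_meas [measurable]: "S \<in> borel_measurable M"
    unfolding S_def by measurable
  have int_S: "(\<integral>\<^sup>+\<omega>. S \<omega> \<partial>M) < \<infinity>"
    using summable unfolding S_def by (subst nn_integral_suminf) auto
  have AE_S: "AE \<omega> in M. S \<omega> \<noteq> \<infinity>"
    using int_S by (intro nn_integral_noteq_infinite) auto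
  have \<zeta>'_meas [measurable]: "\<zeta>' \<in> borel_measurable M"
    unfolding \<zeta>'_def by measurable
  have "ennreal (\<Psi> (\<zeta>' \<omega>)) \<le> ennreal (\<Psi> 1) + S \<omega>" for \<omega>
  proof (cases "S \<omega> = \<infinity>")
    case False
    have "\<Psi> (\<zeta>' \<omega>) \<le> \<Psi> 1 + \<Psi> (enn2real (SUP j. ennreal (c j \<omega>)))"
      using orlicz_nonneg[OF assms(2)] by (simp add: \<zeta>'_def max_def)
    then have "ennreal (\<Psi> (\<zeta>' \<omega>))
        \<le> ennreal (\<Psi> 1) + ennreal (\<Psi> (enn2real (SUP j. ennreal (c j \<omega>))))"
      by (metis ennreal_leI ennreal_plus orlicz_nonneg[OF assms(2)])
    also have "\<dots> \<le> ennreal (\<Psi> 1) + S \<omega>"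
      using orlicz_enn2real_SUP_le_suminf(1)[OF assms(2), of "\<lambda>j. c j \<omega>"] False c_nonneg
      unfolding S_def by (intro add_left_mono) auto
    finally show ?thesis .
  qed simp
  then have "(\<integral>\<^sup>+\<omega>. ennreal (\<Psi> (\<zeta>' \<omega>)) \<partial>M) \<le> (\<integral>\<^sup>+\<omega>. ennreal (\<Psi> 1) + S \<omega> \<partial>M)"
    by (intro nn_integral_mono)
  also have "\<dots> = ennreal (\<Psi> 1) + (\<integral>\<^sup>+\<omega>. S \<omega> \<partial>M)"
    by (subst nn_integral_add) (auto simp: emeasure_space_1)
  also have "\<dots> < \<infinity>"
    using int_S by (simp add: less_top[symmetric])
  finally have fin: "orlicz_norm_finite M \<Psi> \<zeta>'"
    by (intro orlicz_norm_finite_if_nn_integral_finite[OF assms(2) \<zeta>'_meas]) simp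
  define \<nu> where "\<nu> = orlicz_norm M \<Psi> \<zeta>'"
  have "0 < \<nu>"
    unfolding \<nu>_def using fin by (intro orlicz_norm_pos[OF assms(1,2), of _ 1]) (auto simp: \<zeta>'_def)
  have "AE \<omega> in M. \<forall>j. c j \<omega> \<le> \<nu> * (\<zeta>' \<omega> / \<nu>)"
    using AE_S
  proof eventually_elim
    case (elim \<omega>)
    have "c j \<omega> \<le> \<zeta>' \<omega>" for j
      using orlicz_enn2real_SUP_le_suminf(2)[OF assms(2), of "\<lambda>j. c j \<omega>" j] elim c_nonneg
      unfolding S_def \<zeta>'_def by (simp add: le_max_iff_disj)
    then show ?case
      using \<open>0 < \<nu>\<close> by simp
  qed
  moreover have "\<forall>\<omega>\<in>space M. 0 \<le> \<zeta>' \<omega> / \<nu>"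
    using \<open>0 < \<nu>\<close> by (simp add: \<zeta>'_def)
  ultimately show ?thesis
    using orlicz_norm_divide[OF fin \<open>0 < \<nu>\<close>] \<open>0 < \<nu>\<close>
    by (intro exI[of _ "\<lambda>\<omega>. \<zeta>' \<omega> / \<nu>"] exI[of _ \<nu>]) (auto simp: \<nu>_def)
qed

section \<open>Choice of scales\<close>

lemma exists_scale_majorant:
  fixes \<theta> :: "nat \<Rightarrow> real"
  assumes "\<And>j. 0 < \<theta> j"
  shows "\<exists>h :: real \<Rightarrow> real. continuous_on UNIV h \<and> strict_mono h \<and> h 0 = 0 \<and>
             (\<forall>n x. \<theta> (Suc n) \<le> x \<longrightarrow> (1/2) ^ n \<le> h x)"
proof -
  define t where "t j x = (1/2::real) ^ j * min 1 (max 0 (x / \<theta> (Suc j)))" for j x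
  define h where "h x = x + (\<Sum>j. t j x)" for x
  have t_bound: "norm (t j x) \<le> (1/2) ^ j" for j x
    unfolding t_def by (auto simp: abs_mult intro!: mult_left_le)
  have t_nonneg: "0 \<le> t j x" for j x
    unfolding t_def by auto
  have summable: "summable (\<lambda>j. t j x)" for x
    using t_bound by (intro summable_comparison_test[OF _ summable_geometric[of "1/2"]]) auto
  have "uniform_limit UNIV (\<lambda>n x. \<Sum>j<n. t j x) (\<lambda>x. \<Sum>j. t j x) sequentially"
    using t_bound by (intro Weierstrass_m_test[OF _ summable_geometric[of "1/2::real"]]) auto
  moreover have "continuous_on UNIV (\<lambda>x. \<Sum>j<n. t j x)" for n
    unfolding t_def using assms by (intro continuous_intros) (auto simp: less_imp_neq[symmetric])
  ultimately have "continuous_on UNIV (\<lambda>x. \<Sum>j. t j x)"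
    by (intro uniform_limit_theorem) auto
  then have "continuous_on UNIV h"
    unfolding h_def by (intro continuous_intros)
  moreover have "strict_mono h"
  proof (rule strict_monoI)
    fix x y :: real
    assume "x < y"
    have "t j x \<le> t j y" for j
      unfolding t_def using \<open>x < y\<close> assms[of "Suc j"]
      by (intro mult_left_mono min.mono max.mono divide_right_mono) auto
    then have "(\<Sum>j. t j x) \<le> (\<Sum>j. t j y)"
      by (intro suminf_le summable)
    then show "h x < h y"
      using \<open>x < y\<close> by (simp add: h_def)
  qed
  moreover have "\<forall>n x. \<theta> (Suc n) \<le> x \<longrightarrow> (1/2) ^ n \<le> h x"
  proof (intro allI impI)
    fix n x
    assume x: "\<theta> (Suc n) \<le> x"
    have "0 \<le> x"
      using x assms[of "Suc n"] by linarith
    have "(1/2) ^ n = (\<Sum>j\<in>{n}. t j x)"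
      using x assms[of "Suc n"] by (simp add: t_def)
    also have "\<dots> \<le> (\<Sum>j. t j x)"
      by (intro sum_le_suminf summable) (auto simp: t_nonneg)
    finally show "(1/2) ^ n \<le> h x"
      using \<open>0 \<le> x\<close> by (simp add: h_def)
  qed
  moreover have "h 0 = 0"
    by (simp add: h_def t_def)
  ultimately show ?thesis
    by blast
qed

lemma exists_scale_bracket:
  fixes \<theta> :: "nat \<Rightarrow> real"
  assumes "\<theta> \<longlonglongrightarrow> 0" and "0 < \<delta>" and "\<delta> < \<theta> 0"
  shows "\<exists>n. \<delta> < \<theta> n \<and> \<theta> (Suc n) \<le> \<delta>"
proof -
  have "eventually (\<lambda>n. \<theta> n < \<delta>) sequentially"
    using assms(1,2) by (rule order_tendstoD)
  then obtain n where "\<theta> n \<le> \<delta>"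
    by (auto simp: eventually_sequentially intro: less_imp_le)
  then have "\<exists>n. \<not> \<theta> n \<le> \<delta> \<and> \<theta> (Suc n) \<le> \<delta>"
    using assms(3) by (intro exists_least_lemma) auto
  then show ?thesis
    by (auto simp: not_le)
qed

lemma exists_summable_scales:
  fixes I :: "nat \<Rightarrow> real \<Rightarrow> ennreal"
  assumes "\<And>j. (\<lambda>m. I j (1 / real (Suc m))) \<longlonglongrightarrow> 0" and "I 0 a < \<infinity>" and "0 < a"
  shows "\<exists>\<theta>. \<theta> 0 = a \<and> (\<forall>j. 0 < \<theta> j) \<and> \<theta> \<longlonglongrightarrow> 0 \<and> (\<Sum>j. I j (\<theta> j)) < \<infinity>"
proof -
  have "\<forall>j. \<exists>m. I j (1 / real (Suc m)) < ennreal ((1/2) ^ j) \<and> j \<le> m"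
  proof
    fix j
    have "eventually (\<lambda>m. I j (1 / real (Suc m)) < ennreal ((1/2) ^ j)) sequentially"
      using assms(1) by (rule order_tendstoD) simp
    then have "eventually (\<lambda>m. I j (1 / real (Suc m)) < ennreal ((1/2) ^ j) \<and> j \<le> m) sequentially"
      by (intro eventually_conj eventually_ge_at_top)
    then obtain N where "\<And>m. N \<le> m \<Longrightarrow> I j (1 / real (Suc m)) < ennreal ((1/2) ^ j) \<and> j \<le> m"
      unfolding eventually_sequentially by blast
    then show "\<exists>m. I j (1 / real (Suc m)) < ennreal ((1/2) ^ j) \<and> j \<le> m"
      by blast
  qed
  then obtain m where m: "\<And>j. I j (1 / real (Suc (m j))) < ennreal ((1/2) ^ j)" "\<And>j. j \<le> m j"
    by metis
  define \<theta> where "\<theta> j = (if j = 0 then a else 1 / real (Suc (m j)))" for j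
  have "\<theta> \<longlonglongrightarrow> 0"
  proof (rule tendsto_sandwich[of "\<lambda>_. 0" _ _ "\<lambda>j. 1 / real (Suc j)"])
    show "eventually (\<lambda>j. \<theta> j \<le> 1 / real (Suc j)) sequentially"
      using eventually_ge_at_top[of 1]
      by eventually_elim (use m(2) in \<open>auto simp: \<theta>_def frac_le\<close>)
    show "(\<lambda>j. 1 / real (Suc j)) \<longlonglongrightarrow> 0"
      using LIMSEQ_Suc[OF lim_inverse_n'] by simp
  qed (use assms(3) in \<open>auto simp: \<theta>_def\<close>)
  moreover have "(\<Sum>j. I j (\<theta> j)) < \<infinity>"
  proof -
    have "(\<Sum>j. I j (\<theta> j)) \<le> (\<Sum>j. (if j = 0 then I 0 a else 0) + ennreal ((1/2) ^ j))"
      using m(1) by (intro suminf_le) (auto simp: \<theta>_def less_imp_le)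
    also have "\<dots> = (\<Sum>j. if j = 0 then I 0 a else 0) + (\<Sum>j. ennreal ((1/2) ^ j))"
      by (rule suminf_add[symmetric]) (auto intro: summableI)
    also have "(\<Sum>j. if j = 0 then I 0 a else 0) = I 0 a"
      using sums_single[of 0 "\<lambda>_. I 0 a"] by (simp add: sums_iff)
    also have "(\<Sum>j. ennreal ((1/2) ^ j)) = 2"
      by (subst suminf_ennreal2) (auto simp: suminf_geometric summable_geometric)
    also have "I 0 a + 2 < \<infinity>"
      using assms(2) by (simp add: less_top[symmetric])
    finally show ?thesis .
  qed
  ultimately show ?thesis
    using assms(3) by (intro exI[of _ \<theta>]) (auto simp: \<theta>_def)
qed

lemma exists_orlicz_summable_scales:
  fixes W :: "real \<Rightarrow> 'b \<Rightarrow> real"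
  assumes "orlicz_function \<Psi>"
    and [measurable]: "\<And>r. 0 < r \<Longrightarrow> W r \<in> borel_measurable M" "G \<in> borel_measurable M"
    and "\<And>r \<omega>. 0 < r \<Longrightarrow> 0 \<le> W r \<omega>" and "\<And>r \<omega>. 0 < r \<Longrightarrow> W r \<omega> \<le> G \<omega>"
    and "\<And>c. 0 < c \<Longrightarrow> (\<integral>\<^sup>+\<omega>. ennreal (\<Psi> (c * G \<omega>)) \<partial>M) < \<infinity>"
    and "\<And>\<omega>. (\<lambda>m. W (1 / real (Suc m)) \<omega>) \<longlonglongrightarrow> 0"
    and "0 < a"
  shows "\<exists>\<theta>. \<theta> 0 = a \<and> (\<forall>j. 0 < \<theta> j) \<and> \<theta> \<longlonglongrightarrow> 0 \<and>
             (\<Sum>j. \<integral>\<^sup>+\<omega>. ennreal (\<Psi> (2 ^ j * W (\<theta> j) \<omega>)) \<partial>M) < \<infinity>"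
proof (rule exists_summable_scales)
  show "(\<lambda>m. \<integral>\<^sup>+\<omega>. ennreal (\<Psi> (2 ^ j * W (1 / real (Suc m)) \<omega>)) \<partial>M) \<longlonglongrightarrow> 0" for j
    using assms(4,5,7) assms(6)[of "2 ^ j"]
    by (intro nn_integral_orlicz_tendsto_zero[OF assms(1), where G="\<lambda>\<omega>. 2 ^ j * G \<omega>"])
      (auto intro: tendsto_mult_right_zero)
  have "(\<integral>\<^sup>+\<omega>. ennreal (\<Psi> (2 ^ 0 * W a \<omega>)) \<partial>M) \<le> (\<integral>\<^sup>+\<omega>. ennreal (\<Psi> (1 * G \<omega>)) \<partial>M)"
    using assms(4,5,8) by (intro nn_integral_mono ennreal_leI orlicz_mono[OF assms(1)]) auto
  also have "\<dots> < \<infinity>"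
    using assms(6)[of 1] by simp
  finally show "(\<integral>\<^sup>+\<omega>. ennreal (\<Psi> (2 ^ 0 * W a \<omega>)) \<partial>M) < \<infinity>" .
qed (use assms(8) in simp)

section \<open>Oscillation over a countable dense set\<close>

definition oscillation :: "'a set \<Rightarrow> ('a \<Rightarrow> 'a \<Rightarrow> real) \<Rightarrow> ('a \<Rightarrow> real) \<Rightarrow> real \<Rightarrow> real" where
  "oscillation S d f r = (SUP p \<in> {p \<in> S \<times> S. d (fst p) (snd p) < r}. \<bar>f (fst p) - f (snd p)\<bar>)"

lemma bdd_above_oscillation:
  fixes f :: "'a \<Rightarrow> real"
  assumes "\<forall>s\<in>S. \<bar>f s\<bar> \<le> B"
  shows "bdd_above ((\<lambda>p. \<bar>f (fst p) - f (snd p)\<bar>) ` {p \<in> S \<times> S. d (fst p) (snd p) < r})"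
proof (rule bdd_aboveI)
  fix y
  assume "y \<in> (\<lambda>p. \<bar>f (fst p) - f (snd p)\<bar>) ` {p \<in> S \<times> S. d (fst p) (snd p) < r}"
  then obtain a b where "a \<in> S" "b \<in> S" "y = \<bar>f a - f b\<bar>"
    by auto
  moreover have "\<bar>f a\<bar> \<le> B" "\<bar>f b\<bar> \<le> B"
    using assms \<open>a \<in> S\<close> \<open>b \<in> S\<close> by auto
  ultimately show "y \<le> 2 * B"
    using abs_triangle_ineq4[of "f a" "f b"] by linarith
qed

lemma oscillation_ge:
  assumes "\<forall>s\<in>S. \<bar>f s\<bar> \<le> B" and "s \<in> S" and "t \<in> S" and "d s t < r"
  shows "\<bar>f s - f t\<bar> \<le> oscillation S d f r"
  unfolding oscillation_def using bdd_above_oscillation[OF assms(1)] assms(2-4)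
  by (auto intro!: cSUP_upper2[where x="(s, t)"])

lemma borel_measurable_oscillation:
  fixes \<xi> :: "'a \<Rightarrow> 'b \<Rightarrow> real"
  assumes "countable S" and "\<And>s. s \<in> S \<Longrightarrow> \<xi> s \<in> borel_measurable M"
    and "\<And>\<omega> s. s \<in> S \<Longrightarrow> \<bar>\<xi> s \<omega>\<bar> \<le> B \<omega>"
  shows "(\<lambda>\<omega>. oscillation S d (\<lambda>x. \<xi> x \<omega>) r) \<in> borel_measurable M"
  unfolding oscillation_def
proof (rule borel_measurable_cSUP)
  show "countable {p \<in> S \<times> S. d (fst p) (snd p) < r}"
    using assms(1) by (auto intro: countable_subset[of _ "S \<times> S"])
  show "(\<lambda>\<omega>. \<bar>\<xi> (fst p) \<omega> - \<xi> (snd p) \<omega>\<bar>) \<in> borel_measurable M"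
    if "p \<in> {p \<in> S \<times> S. d (fst p) (snd p) < r}" for p
    using that assms(2) by auto
  show "bdd_above ((\<lambda>p. \<bar>\<xi> (fst p) \<omega> - \<xi> (snd p) \<omega>\<bar>) ` {p \<in> S \<times> S. d (fst p) (snd p) < r})"
    for \<omega>
    using assms(3) by (intro bdd_above_oscillation) auto
qed

context Metric_space
begin

lemma oscillation_least:
  fixes f :: "'a \<Rightarrow> real"
  assumes "S \<subseteq> M" and "S \<noteq> {}" and "0 < r"
    and "\<And>s t. s \<in> S \<Longrightarrow> t \<in> S \<Longrightarrow> d s t < r \<Longrightarrow> \<bar>f s - f t\<bar> \<le> e"
  shows "oscillation S d f r \<le> e"
  unfolding oscillation_def
proof (rule cSUP_least)
  obtain s where "s \<in> S"
    using assms(2) by blast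
  then show "{p \<in> S \<times> S. d (fst p) (snd p) < r} \<noteq> {}"
    using assms(1,3) by (auto intro!: exI[of _ s])
qed (use assms(4) in auto)

lemma oscillation_nonneg:
  fixes f :: "'a \<Rightarrow> real"
  assumes "\<forall>s\<in>S. \<bar>f s\<bar> \<le> B" and "S \<subseteq> M" and "S \<noteq> {}" and "0 < r"
  shows "0 \<le> oscillation S d f r"
proof -
  obtain s where "s \<in> S"
    using assms(3) by blast
  then show ?thesis
    using oscillation_ge[OF assms(1), of s s d r] assms(2,4) by auto
qed

lemma oscillation_le:
  fixes f :: "'a \<Rightarrow> real"
  assumes "\<forall>s\<in>S. \<bar>f s\<bar> \<le> B" and "S \<subseteq> M" and "S \<noteq> {}" and "0 < r"
  shows "oscillation S d f r \<le> 2 * B"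
proof (rule oscillation_least[OF assms(2-4)])
  fix s t
  assume "s \<in> S" "t \<in> S"
  then have "\<bar>f s\<bar> \<le> B" "\<bar>f t\<bar> \<le> B"
    using assms(1) by auto
  then show "\<bar>f s - f t\<bar> \<le> 2 * B"
    using abs_triangle_ineq4[of "f s" "f t"] by linarith
qed

lemma continuous_map_bounded:
  fixes f :: "'a \<Rightarrow> real"
  assumes "compact_space mtopology" and "continuous_map mtopology euclidean f"
  shows "\<exists>B. \<forall>x\<in>M. \<bar>f x\<bar> \<le> B"
proof -
  have "compactin euclidean (f ` M)"
    using assms(1) image_compactin[OF _ assms(2), of M] by (simp add: compact_space_def)
  then have "bounded (f ` M)"
    by (simp add: compact_imp_bounded)
  then show ?thesis
    by (auto simp: bounded_iff)
qed

lemma continuous_map_uniformly_continuous: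
  fixes f :: "'a \<Rightarrow> real"
  assumes "compact_space mtopology" and "continuous_map mtopology euclidean f" and "0 < e"
  shows "\<exists>\<tau>>0. \<forall>x\<in>M. \<forall>y\<in>M. d x y < \<tau> \<longrightarrow> \<bar>f x - f y\<bar> < e"
proof -
  have "uniformly_continuous_map (metric (M, d)) euclidean_metric f"
    by (rule continuous_imp_uniformly_continuous_map) (use assms(1,2) in simp)
  then obtain \<tau> where "0 < \<tau>" "\<forall>x\<in>M. \<forall>y\<in>M. d y x < \<tau> \<longrightarrow> dist (f y) (f x) < e"
    using assms(3) unfolding uniformly_continuous_map_def by auto
  then show ?thesis
    by (auto simp: dist_real_def)
qed

lemma oscillation_tendsto_zero:
  fixes f :: "'a \<Rightarrow> real"
  assumes "compact_space mtopology" and "continuous_map mtopology euclidean f"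
    and "S \<subseteq> M" and "S \<noteq> {}" and "r \<longlonglongrightarrow> 0" and "\<And>m. 0 < r m"
  shows "(\<lambda>m. oscillation S d f (r m)) \<longlonglongrightarrow> 0"
proof (rule LIMSEQ_I)
  fix e :: real
  assume "0 < e"
  then have "0 < e / 2"
    by simp
  then obtain \<tau> where \<tau>: "0 < \<tau>" "\<forall>x\<in>M. \<forall>y\<in>M. d x y < \<tau> \<longrightarrow> \<bar>f x - f y\<bar> < e / 2"
    using continuous_map_uniformly_continuous[OF assms(1,2)] by blast
  obtain B where B: "\<forall>x\<in>M. \<bar>f x\<bar> \<le> B"
    using continuous_map_bounded[OF assms(1,2)] by blast
  obtain m0 where m0: "\<And>m. m0 \<le> m \<Longrightarrow> r m < \<tau>"
    using order_tendstoD(2)[OF assms(5) \<tau>(1)] by (auto simp: eventually_sequentially)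
  have "norm (oscillation S d f (r m)) < e" if "m0 \<le> m" for m
  proof -
    have "oscillation S d f (r m) \<le> e / 2"
      using \<tau>(2) m0[OF that] assms(3) by (intro oscillation_least assms(3,4,6)) force
    moreover have "0 \<le> oscillation S d f (r m)"
      using B assms(3) by (intro oscillation_nonneg[of _ _ B] assms(3,4,6)) auto
    ultimately show ?thesis
      using \<open>0 < e\<close> by simp
  qed
  then show "\<exists>m0. \<forall>m\<ge>m0. norm (oscillation S d f (r m) - 0) < e"
    by auto
qed

lemma modulus_cont_zero:
  fixes f :: "'a \<Rightarrow> real"
  assumes "M \<noteq> {}"
  shows "modulus_cont M d f 0 = 0"
proof -
  have "d x y \<le> 0 \<longleftrightarrow> x = y" if "x \<in> M" "y \<in> M" for x y
    using nonneg[of x y] zero[OF that] by linarith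
  then have "{(x, y). x \<in> M \<and> y \<in> M \<and> d x y \<le> 0} = (\<lambda>x. (x, x)) ` M"
    by auto
  then show ?thesis
    using assms by (simp add: modulus_cont_def image_image)
qed

lemma modulus_cont_le_oscillation:
  fixes f :: "'a \<Rightarrow> real"
  assumes "compact_space mtopology" and "continuous_map mtopology euclidean f"
    and "S \<subseteq> M" and dense: "\<And>x \<tau>. x \<in> M \<Longrightarrow> 0 < \<tau> \<Longrightarrow> \<exists>s\<in>S. d s x < \<tau>"
    and "M \<noteq> {}" and "0 \<le> \<delta>" and "\<delta> < r"
  shows "modulus_cont M d f \<delta> \<le> oscillation S d f r"
  unfolding modulus_cont_def
proof (rule cSUP_least)
  obtain x where "x \<in> M"
    using assms(5) by blast
  then have "(x, x) \<in> {(x, y). x \<in> M \<and> y \<in> M \<and> d x y \<le> \<delta>}"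
    using assms(6) by simp
  then show "{(x, y). x \<in> M \<and> y \<in> M \<and> d x y \<le> \<delta>} \<noteq> {}"
    by blast
next
  obtain B where B: "\<forall>x\<in>M. \<bar>f x\<bar> \<le> B"
    using continuous_map_bounded[OF assms(1,2)] by blast
  fix p
  assume "p \<in> {(x, y). x \<in> M \<and> y \<in> M \<and> d x y \<le> \<delta>}"
  then obtain x y where p: "p = (x, y)" "x \<in> M" "y \<in> M" "d x y \<le> \<delta>"
    by auto
  have "\<bar>f x - f y\<bar> \<le> oscillation S d f r + e" if "0 < e" for e
  proof -
    have "0 < e / 2"
      using that by simp
    then obtain \<tau> where \<tau>: "0 < \<tau>" "\<forall>x\<in>M. \<forall>y\<in>M. d x y < \<tau> \<longrightarrow> \<bar>f x - f y\<bar> < e / 2"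
      using continuous_map_uniformly_continuous[OF assms(1,2)] by blast
    define \<tau>' where "\<tau>' = min \<tau> ((r - \<delta>) / 2)"
    have "0 < \<tau>'"
      using \<tau>(1) assms(7) by (simp add: \<tau>'_def)
    then obtain s t where s: "s \<in> S" "d s x < \<tau>'" and t: "t \<in> S" "d t y < \<tau>'"
      using dense p(2,3) by meson
    have "s \<in> M" "t \<in> M"
      using s t assms(3) by auto
    have "d s t \<le> d s x + d x y + d y t"
      using triangle[of s x t] triangle[of x y t] \<open>s \<in> M\<close> \<open>t \<in> M\<close> p(2,3) by linarith
    then have "d s t < r"
      using s(2) t(2) p(4) commute[of y t] by (simp add: \<tau>'_def)
    then have "\<bar>f s - f t\<bar> \<le> oscillation S d f r"
      using B assms(3) s(1) t(1) by (intro oscillation_ge[of _ _ B]) auto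
    moreover have "\<bar>f x - f s\<bar> < e / 2" "\<bar>f t - f y\<bar> < e / 2"
      using \<tau>(2) p(2,3) \<open>s \<in> M\<close> \<open>t \<in> M\<close> s(2) t(2) commute[of x s] by (auto simp: \<tau>'_def)
    ultimately show ?thesis
      by linarith
  qed
  then show "\<bar>f (fst p) - f (snd p)\<bar> \<le> oscillation S d f r"
    using p(1) by (auto intro: field_le_epsilon)
qed

lemma modulus_cont_le_scale_majorant:
  fixes f :: "'a \<Rightarrow> real" and \<theta> :: "nat \<Rightarrow> real" and h :: "real \<Rightarrow> real"
  assumes "compact_space mtopology" and "continuous_map mtopology euclidean f"
    and "S \<subseteq> M" and "\<And>x \<tau>. x \<in> M \<Longrightarrow> 0 < \<tau> \<Longrightarrow> \<exists>s\<in>S. d s x < \<tau>" and "M \<noteq> {}"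
    and "\<theta> \<longlonglongrightarrow> 0" and "\<And>j. 0 < \<theta> j" and "\<And>j. 2 ^ j * oscillation S d f (\<theta> j) \<le> A"
    and "\<And>n x. \<theta> (Suc n) \<le> x \<Longrightarrow> (1/2) ^ n \<le> h x" and "h 0 = 0"
    and "0 \<le> \<delta>" and "\<delta> < \<theta> 0"
  shows "modulus_cont M d f \<delta> \<le> A * h \<delta>"
proof (cases "\<delta> = 0")
  case True
  then show ?thesis
    using assms(5,10) by (simp add: modulus_cont_zero)
next
  case False
  with assms(11) have "0 < \<delta>"
    by simp
  then obtain n where n: "\<delta> < \<theta> n" "\<theta> (Suc n) \<le> \<delta>"
    using exists_scale_bracket[OF assms(6) _ assms(12)] by blast
  obtain x where "x \<in> M"
    using assms(5) by blast
  then have "S \<noteq> {}"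
    using assms(4)[of x 1] by auto
  obtain B where "\<forall>x\<in>M. \<bar>f x\<bar> \<le> B"
    using continuous_map_bounded[OF assms(1,2)] by blast
  then have "0 \<le> oscillation S d f (\<theta> 0)"
    using assms(3) by (intro oscillation_nonneg[OF _ assms(3) \<open>S \<noteq> {}\<close> assms(7)]) auto
  then have "0 \<le> A"
    using assms(8)[of 0] by simp
  have "modulus_cont M d f \<delta> \<le> oscillation S d f (\<theta> n)"
    using modulus_cont_le_oscillation[OF assms(1-5,11) n(1)] .
  also have "\<dots> \<le> A * (1/2) ^ n"
    using assms(8)[of n] by (simp add: field_simps)
  also have "\<dots> \<le> A * h \<delta>"
    using assms(9)[OF n(2)] \<open>0 \<le> A\<close> by (rule mult_left_mono)
  finally show ?thesis .
qed

end

section \<open>Modulus of continuity of random fields\<close>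

lemma separable_field_dense:
  assumes "Metric_space X d" and "prob_space M" and "separable_field M X d \<xi>"
  shows "\<exists>S\<subseteq>X. countable S \<and> (\<forall>x \<tau>. x \<in> X \<longrightarrow> 0 < \<tau> \<longrightarrow> (\<exists>s\<in>S. d s x < \<tau>))"
proof -
  interpret Metric_space X d by fact
  obtain S N where "S \<subseteq> X" "countable S" "N \<in> null_sets M"
    and approx: "\<forall>\<omega>\<in>space M - N. \<forall>x\<in>X. \<exists>s :: nat \<Rightarrow> 'a. range s \<subseteq> S \<and>
       limitin mtopology s x sequentially \<and> (\<lambda>n. \<xi> (s n) \<omega>) \<longlonglongrightarrow> \<xi> x \<omega>"
    using assms(3) unfolding separable_field_def by blast
  have "space M - N \<noteq> {}"
    using \<open>N \<in> null_sets M\<close> prob_space.emeasure_space_1[OF assms(2)]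
    by (metis Diff_eq_empty_iff emeasure_eq_0 null_setsD1 null_setsD2 zero_neq_one)
  then obtain \<omega> where \<omega>: "\<omega> \<in> space M - N"
    by blast
  have "\<exists>s\<in>S. d s x < \<tau>" if "x \<in> X" "0 < \<tau>" for x \<tau>
  proof -
    obtain s :: "nat \<Rightarrow> 'a" where "range s \<subseteq> S" "limitin mtopology s x sequentially"
      using approx \<omega> \<open>x \<in> X\<close> by meson
    moreover obtain n where "d (s n) x < \<tau>"
      using calculation(2) \<open>0 < \<tau>\<close> by (auto simp: limitin_metric eventually_sequentially)
    ultimately show ?thesis
      by auto
  qed
  then show ?thesis
    using \<open>S \<subseteq> X\<close> \<open>countable S\<close> by blast
qed

lemma exists_continuous_modification:
  fixes \<xi> :: "'a \<Rightarrow> 'b \<Rightarrow> real"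
  assumes "AE \<omega> in M. continuous_map T euclidean (\<lambda>x. \<xi> x \<omega>)"
    and "\<And>x. x \<in> topspace T \<Longrightarrow> \<xi> x \<in> borel_measurable M"
  shows "\<exists>\<xi>'. (\<forall>x\<in>topspace T. \<xi>' x \<in> borel_measurable M) \<and>
              (\<forall>\<omega>. continuous_map T euclidean (\<lambda>x. \<xi>' x \<omega>)) \<and>
              (AE \<omega> in M. \<forall>x. \<xi>' x \<omega> = \<xi> x \<omega>)"
proof -
  obtain N where N: "N \<in> null_sets M"
    and bad: "{\<omega>\<in>space M. \<not> continuous_map T euclidean (\<lambda>x. \<xi> x \<omega>)} \<subseteq> N"
    using assms(1) unfolding eventually_ae_filter by blast
  define \<xi>' where "\<xi>' x \<omega> = (if \<omega> \<in> space M - N then \<xi> x \<omega> else 0)" for x \<omega>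
  have "\<xi>' x \<in> borel_measurable M" if "x \<in> topspace T" for x
    unfolding \<xi>'_def using N assms(2)[OF that]
    by (intro measurable_If_set) auto
  moreover have "continuous_map T euclidean (\<lambda>x. \<xi>' x \<omega>)" for \<omega>
    using bad by (cases "\<omega> \<in> space M - N") (auto simp: \<xi>'_def)
  moreover have "AE \<omega> in M. \<forall>x. \<xi>' x \<omega> = \<xi> x \<omega>"
    using AE_not_in[OF N] AE_space by eventually_elim (auto simp: \<xi>'_def)
  ultimately show ?thesis
    by blast
qed

lemma oscillation_orlicz_majorant:
  fixes \<xi> :: "'a \<Rightarrow> 'b \<Rightarrow> real"
  assumes "Metric_space X d" and "compact_space (Metric_space.mtopology X d)" and "prob_space M"
    and "S \<subseteq> X" and "countable S" and "S \<noteq> {}"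
    and [measurable]: "\<And>s. s \<in> S \<Longrightarrow> \<xi> s \<in> borel_measurable M"
    and cont: "\<And>\<omega>. continuous_map (Metric_space.mtopology X d) euclidean (\<lambda>x. \<xi> x \<omega>)"
    and \<Phi>: "orlicz_function \<Phi>" and "orlicz_norm_finite M \<Phi> Z"
    and "AE \<omega> in M. \<forall>s\<in>S. \<bar>\<xi> s \<omega>\<bar> \<le> Z \<omega>"
    and \<Psi>: "orlicz_function \<Psi>" and weaker: "\<And>v. v > 0 \<Longrightarrow> ((\<lambda>u. \<Psi> (u * v) / \<Phi> u) \<longlongrightarrow> 0) at_top"
    and "0 < a"
  shows "\<exists>\<theta> \<zeta> \<nu>. \<theta> 0 = a \<and> (\<forall>j. 0 < \<theta> j) \<and> \<theta> \<longlonglongrightarrow> 0 \<and>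
           \<zeta> \<in> borel_measurable M \<and> (\<forall>\<omega>\<in>space M. 0 \<le> \<zeta> \<omega>) \<and>
           orlicz_norm_finite M \<Psi> \<zeta> \<and> orlicz_norm M \<Psi> \<zeta> = 1 \<and> 0 < \<nu> \<and>
           (AE \<omega> in M. \<forall>j. 2 ^ j * oscillation S d (\<lambda>x. \<xi> x \<omega>) (\<theta> j) \<le> \<nu> * \<zeta> \<omega>)"
proof -
  interpret Metric_space X d by fact
  define \<eta> where "\<eta> \<omega> = (SUP s\<in>S. \<bar>\<xi> s \<omega>\<bar>)" for \<omega>
  define W where "W r \<omega> = oscillation S d (\<lambda>x. \<xi> x \<omega>) r" for r \<omega>
  have bdd: "bdd_above ((\<lambda>s. \<bar>\<xi> s \<omega>\<bar>) ` S)" for \<omega>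
    using continuous_map_bounded[OF assms(2) cont] assms(4) by (force intro: bdd_aboveI)
  have \<eta>_ge: "\<forall>s\<in>S. \<bar>\<xi> s \<omega>\<bar> \<le> \<eta> \<omega>" for \<omega>
    unfolding \<eta>_def using bdd by (auto intro: cSUP_upper)
  have \<eta>_nonneg: "0 \<le> \<eta> \<omega>" for \<omega>
    using \<eta>_ge[of \<omega>] assms(6) by (meson abs_ge_zero all_not_in_conv order_trans)
  have \<eta>_meas [measurable]: "\<eta> \<in> borel_measurable M"
    unfolding \<eta>_def using assms(5) bdd by (intro borel_measurable_cSUP) auto
  have W_meas [measurable]: "W r \<in> borel_measurable M" for r
    unfolding W_def using \<eta>_ge by (intro borel_measurable_oscillation[OF assms(5,7)]) auto
  have W_nonneg: "0 \<le> W r \<omega>" if "0 < r" for r \<omega>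
    unfolding W_def using \<eta>_ge assms(4,6) that by (rule oscillation_nonneg)
  have W_le: "W r \<omega> \<le> 2 * \<eta> \<omega>" if "0 < r" for r \<omega>
    unfolding W_def using \<eta>_ge assms(4,6) that by (rule oscillation_le)
  have "AE \<omega> in M. 0 \<le> \<eta> \<omega> \<and> \<eta> \<omega> \<le> Z \<omega>"
    using assms(11)
  proof eventually_elim
    case (elim \<omega>)
    then show ?case
      using \<eta>_nonneg[of \<omega>] assms(6) unfolding \<eta>_def by (auto intro: cSUP_least)
  qed
  then have "orlicz_norm_finite M \<Phi> \<eta>"
    by (rule orlicz_norm_finite_AE_mono[OF \<Phi> _ assms(10)])
  then have "(\<integral>\<^sup>+\<omega>. ennreal (\<Psi> (c * (2 * \<eta> \<omega>))) \<partial>M) < \<infinity>" if "0 < c" for c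
    using nn_integral_orlicz_weaker_finite[OF assms(3) \<Phi> \<Psi> weaker \<eta>_meas \<eta>_nonneg, of "2 * c"] that
    by (simp add: mult_ac)
  moreover have "(\<lambda>m. W (1 / real (Suc m)) \<omega>) \<longlonglongrightarrow> 0" for \<omega>
    unfolding W_def using LIMSEQ_Suc[OF lim_inverse_n']
    by (intro oscillation_tendsto_zero[OF assms(2) cont assms(4,6)]) auto
  ultimately have "\<exists>\<theta>. \<theta> 0 = a \<and> (\<forall>j. 0 < \<theta> j) \<and> \<theta> \<longlonglongrightarrow> 0 \<and>
      (\<Sum>j. \<integral>\<^sup>+\<omega>. ennreal (\<Psi> (2 ^ j * W (\<theta> j) \<omega>)) \<partial>M) < \<infinity>"
    using W_nonneg W_le assms(14)
    by (intro exists_orlicz_summable_scales[OF \<Psi>, where W=W and G="\<lambda>\<omega>. 2 * \<eta> \<omega>"]) auto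
  then obtain \<theta> where \<theta>: "\<theta> 0 = a" "\<forall>j. 0 < \<theta> j" "\<theta> \<longlonglongrightarrow> 0"
    and summable: "(\<Sum>j. \<integral>\<^sup>+\<omega>. ennreal (\<Psi> (2 ^ j * W (\<theta> j) \<omega>)) \<partial>M) < \<infinity>"
    by blast
  have "\<exists>\<zeta> \<nu>. \<zeta> \<in> borel_measurable M \<and> (\<forall>\<omega>\<in>space M. 0 \<le> \<zeta> \<omega>) \<and>
           orlicz_norm_finite M \<Psi> \<zeta> \<and> orlicz_norm M \<Psi> \<zeta> = 1 \<and> 0 < \<nu> \<and>
           (AE \<omega> in M. \<forall>j. 2 ^ j * W (\<theta> j) \<omega> \<le> \<nu> * \<zeta> \<omega>)"
    using \<theta>(2) W_nonneg summable by (intro orlicz_normalized_majorant[OF assms(3) \<Psi>]) auto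
  then show ?thesis
    using \<theta> by (auto simp: W_def)
qed

lemma modulus_cont_orlicz_majorant_continuous_paths:
  fixes X :: "'a set" and d :: "'a \<Rightarrow> 'a \<Rightarrow> real"
    and M :: "'b measure" and \<xi> :: "'a \<Rightarrow> 'b \<Rightarrow> real"
    and \<Phi> \<Psi> :: "real \<Rightarrow> real"
  assumes "Metric_space X d" and "compact_space (Metric_space.mtopology X d)" and "X \<noteq> {}"
    and "prob_space M"
    and S: "S \<subseteq> X" "countable S" and dense: "\<And>x \<tau>. x \<in> X \<Longrightarrow> 0 < \<tau> \<Longrightarrow> \<exists>s\<in>S. d s x < \<tau>"
    and "\<And>s. s \<in> S \<Longrightarrow> \<xi> s \<in> borel_measurable M"
    and cont: "\<And>\<omega>. continuous_map (Metric_space.mtopology X d) euclidean (\<lambda>x. \<xi> x \<omega>)"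
    and "orlicz_function \<Phi>" and "orlicz_norm_finite M \<Phi> Z"
    and "AE \<omega> in M. \<forall>s\<in>S. \<bar>\<xi> s \<omega>\<bar> \<le> Z \<omega>"
    and "orlicz_function \<Psi>" and "\<And>v. v > 0 \<Longrightarrow> ((\<lambda>u. \<Psi> (u * v) / \<Phi> u) \<longlongrightarrow> 0) at_top"
  shows "\<exists>\<zeta> h. \<zeta> \<in> borel_measurable M \<and> (\<forall>\<omega>\<in>space M. \<zeta> \<omega> \<ge> 0) \<and>
           orlicz_norm_finite M \<Psi> \<zeta> \<and> orlicz_norm M \<Psi> \<zeta> = 1 \<and>
           continuous_on {0..mdiam X d} h \<and> strict_mono_on {0..mdiam X d} h \<and>
           (\<forall>\<delta>\<in>{0..mdiam X d}. h \<delta> \<ge> 0) \<and> h 0 = 0 \<and>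
           (h \<longlongrightarrow> 0) (at_right 0) \<and>
           (AE \<omega> in M. \<forall>\<delta>\<in>{0..mdiam X d}.
               modulus_cont X d (\<lambda>x. \<xi> x \<omega>) \<delta> \<le> \<zeta> \<omega> * h \<delta>)"
proof -
  interpret Metric_space X d by fact
  have "S \<noteq> {}"
    using assms(3) dense[of _ 1] by fastforce
  \<comment> \<open>The first scale exceeds the diameter, so every \<open>\<delta> > 0\<close> in range lies between two scales.\<close>
  have a_pos: "0 < max (mdiam X d) 0 + 1"
    using max.cobounded2[of 0 "mdiam X d"] by linarith
  obtain \<theta> \<zeta> \<nu> where \<theta>: "\<theta> 0 = max (mdiam X d) 0 + 1" "\<forall>j. 0 < \<theta> j" "\<theta> \<longlonglongrightarrow> 0"
    and \<zeta>: "\<zeta> \<in> borel_measurable M" "\<forall>\<omega>\<in>space M. 0 \<le> \<zeta> \<omega>"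
      "orlicz_norm_finite M \<Psi> \<zeta>" "orlicz_norm M \<Psi> \<zeta> = 1" "0 < \<nu>"
    and osc: "AE \<omega> in M. \<forall>j. 2 ^ j * oscillation S d (\<lambda>x. \<xi> x \<omega>) (\<theta> j) \<le> \<nu> * \<zeta> \<omega>"
    using oscillation_orlicz_majorant[OF assms(1,2,4) S \<open>S \<noteq> {}\<close> assms(8-14) a_pos] by blast
  obtain h :: "real \<Rightarrow> real" where h: "continuous_on UNIV h" "strict_mono h" "h 0 = 0"
    and h_scale: "\<And>n x. \<theta> (Suc n) \<le> x \<Longrightarrow> (1/2) ^ n \<le> h x"
    using exists_scale_majorant[of \<theta>] \<theta>(2) by blast
  have "AE \<omega> in M. \<forall>\<delta>\<in>{0..mdiam X d}. modulus_cont X d (\<lambda>x. \<xi> x \<omega>) \<delta> \<le> \<zeta> \<omega> * (\<nu> * h \<delta>)"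
    using osc
  proof eventually_elim
    case (elim \<omega>)
    have "modulus_cont X d (\<lambda>x. \<xi> x \<omega>) \<delta> \<le> \<nu> * \<zeta> \<omega> * h \<delta>" if "\<delta> \<in> {0..mdiam X d}" for \<delta>
      using that \<theta> elim h(3) h_scale
      by (intro modulus_cont_le_scale_majorant[OF assms(2) cont S(1) dense assms(3)]) auto
    then show ?case
      by (simp add: mult_ac)
  qed
  moreover have "(h \<longlongrightarrow> h 0) (at 0)"
    using h(1) by (simp add: continuous_on_eq_continuous_at isCont_def)
  then have "((\<lambda>\<delta>. \<nu> * h \<delta>) \<longlongrightarrow> 0) (at_right 0)"
    using h(3) by (intro tendsto_mult_right_zero) (simp add: tendsto_mono[OF at_within_le_at])
  moreover have "strict_mono_on {0..mdiam X d} (\<lambda>\<delta>. \<nu> * h \<delta>)"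
    using strict_monoD[OF h(2)] \<zeta>(5) by (intro strict_mono_onI) simp
  moreover have "0 \<le> \<nu> * h \<delta>" if "0 \<le> \<delta>" for \<delta>
    using strict_mono_less_eq[OF h(2), of 0 \<delta>] h(3) \<zeta>(5) that by simp
  moreover have "continuous_on {0..mdiam X d} (\<lambda>\<delta>. \<nu> * h \<delta>)"
    using continuous_on_subset[OF h(1)] by (intro continuous_intros) auto
  ultimately show ?thesis
    using \<zeta>(1-4) h(3) by (intro exI[of _ \<zeta>] exI[of _ "\<lambda>\<delta>. \<nu> * h \<delta>"]) auto
qed

theorem theorem4p1:
  fixes X :: "'a set" and d :: "'a \<Rightarrow> 'a \<Rightarrow> real"
    and M :: "'b measure" and \<xi> :: "'a \<Rightarrow> 'b \<Rightarrow> real"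
    and \<Phi> \<Psi> :: "real \<Rightarrow> real"
  assumes "Metric_space X d"
    and "compact_space (Metric_space.mtopology X d)"
    and "X \<noteq> {}"
    and "prob_space M"
    and "\<And>x. x \<in> X \<Longrightarrow> \<xi> x \<in> borel_measurable M"
    and "separable_field M X d \<xi>"
    and "AE \<omega> in M. continuous_map (Metric_space.mtopology X d) euclidean (\<lambda>x. \<xi> x \<omega>)"
    and "orlicz_function \<Phi>"
    and "orlicz_norm_finite M \<Phi> (\<lambda>\<omega>. SUP x\<in>X. \<bar>\<xi> x \<omega>\<bar>)"
    and "orlicz_function \<Psi>"
    and "\<And>v. v > 0 \<Longrightarrow> ((\<lambda>u. \<Psi> (u * v) / \<Phi> u) \<longlongrightarrow> 0) at_top"
  shows "\<exists>\<zeta> h. \<zeta> \<in> borel_measurable M \<and> (\<forall>\<omega>\<in>space M. \<zeta> \<omega> \<ge> 0) \<and>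
           orlicz_norm_finite M \<Psi> \<zeta> \<and> orlicz_norm M \<Psi> \<zeta> = 1 \<and>
           continuous_on {0..mdiam X d} h \<and> strict_mono_on {0..mdiam X d} h \<and>
           (\<forall>\<delta>\<in>{0..mdiam X d}. h \<delta> \<ge> 0) \<and> h 0 = 0 \<and>
           (h \<longlongrightarrow> 0) (at_right 0) \<and>
           (AE \<omega> in M. \<forall>\<delta>\<in>{0..mdiam X d}.
               modulus_cont X d (\<lambda>x. \<xi> x \<omega>) \<delta> \<le> \<zeta> \<omega> * h \<delta>)"
proof -
  interpret Metric_space X d by fact
  obtain S where S: "S \<subseteq> X" "countable S" and dense: "\<And>x \<tau>. x \<in> X \<Longrightarrow> 0 < \<tau> \<Longrightarrow> \<exists>s\<in>S. d s x < \<tau>"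
    using separable_field_dense[OF assms(1,4,6)] by blast
  obtain \<xi>' where meas: "\<forall>x\<in>X. \<xi>' x \<in> borel_measurable M"
    and cont: "\<And>\<omega>. continuous_map mtopology euclidean (\<lambda>x. \<xi>' x \<omega>)"
    and agree: "AE \<omega> in M. \<forall>x. \<xi>' x \<omega> = \<xi> x \<omega>"
    using exists_continuous_modification[OF assms(7)] assms(5) by auto
  have meas_S: "\<xi>' s \<in> borel_measurable M" if "s \<in> S" for s
    using meas S(1) that by auto
  have sup_bound: "AE \<omega> in M. \<forall>s\<in>S. \<bar>\<xi>' s \<omega>\<bar> \<le> (SUP x\<in>X. \<bar>\<xi> x \<omega>\<bar>)"
    using agree
  proof eventually_elim
    case (elim \<omega>)
    then have "bdd_above ((\<lambda>x. \<bar>\<xi> x \<omega>\<bar>) ` X)"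
      using continuous_map_bounded[OF assms(2) cont, of \<omega>] by (auto intro: bdd_aboveI)
    then show ?case
      using S(1) elim by (auto intro: cSUP_upper)
  qed
  obtain \<zeta> h where props: "\<zeta> \<in> borel_measurable M \<and> (\<forall>\<omega>\<in>space M. \<zeta> \<omega> \<ge> 0) \<and>
      orlicz_norm_finite M \<Psi> \<zeta> \<and> orlicz_norm M \<Psi> \<zeta> = 1 \<and>
      continuous_on {0..mdiam X d} h \<and> strict_mono_on {0..mdiam X d} h \<and>
      (\<forall>\<delta>\<in>{0..mdiam X d}. h \<delta> \<ge> 0) \<and> h 0 = 0 \<and> (h \<longlongrightarrow> 0) (at_right 0)"
    and bound: "AE \<omega> in M. \<forall>\<delta>\<in>{0..mdiam X d}.
      modulus_cont X d (\<lambda>x. \<xi>' x \<omega>) \<delta> \<le> \<zeta> \<omega> * h \<delta>"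
    using modulus_cont_orlicz_majorant_continuous_paths[OF assms(1-4) S dense meas_S cont assms(8,9)
        sup_bound assms(10,11)] by blast
  have "AE \<omega> in M. \<forall>\<delta>\<in>{0..mdiam X d}. modulus_cont X d (\<lambda>x. \<xi> x \<omega>) \<delta> \<le> \<zeta> \<omega> * h \<delta>"
    using bound agree by eventually_elim simp
  then show ?thesis
    using props by blast
qed

end
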